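(* Let $m\geq2$ be an integer. There is a constant $C_{\mathbb{K},m}\geq1$, not depending on $n$, such that for all $n\ge1$ and all $m$-homogeneous polynomials $P(x)=\sum_{|\alpha|=m}a_\alpha\mathbf{x}^\alpha$ on $\ell_m^n$, \[ \max_{|\alpha|=m}|a_\alpha|\leq C_{\mathbb{K},m}\|P\|, \] and the optimal such constants satisfy $C_{\mathbb{R},m}\le(\sqrt2)^{m-1}m^m$ and $C_{\mathbb{C},m}\le\big(\frac{2}{\sqrt\pi}\big)^{m-1}m^m$. Moreover, for every $r<\infty$ there is no constant $C$ independent of $n$ such that $\big(\sum_{|\alpha|=m}|a_\alpha|^r\big)^{1/r}\le C\|P\|$ for all $m$-homogeneous polynomials $P$ on $\ell_m^n$ and all $n$.
   Context: $\mathbb{K}$ denotes $\mathbb{R}$ or $\mathbb{C}$. For $\alpha\in\mathbb{N}^n$, $|\alpha|=\alpha_1+\cdots+\alpha_n$ and $\mathbf{x}^\alpha=x_1^{\alpha_1}\cdots x_n^{\alpha_n}$. $\ell_m^n$ is $\mathbb{K}^n$ with the $m$-norm, and $\|P\|=\sup\{|P(x)|:\|x\|_m\le1\}$. *)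

theory Defs
  imports "HOL-Analysis.Analysis"
begin

definition multi_idx :: "nat \<Rightarrow> nat \<Rightarrow> (nat \<Rightarrow> nat) set" where
  "multi_idx n m = {\<alpha>. (\<forall>i\<ge>n. \<alpha> i = 0) \<and> (\<Sum>i<n. \<alpha> i) = m}"

definition monom_eval :: "nat \<Rightarrow> (nat \<Rightarrow> nat) \<Rightarrow> (nat \<Rightarrow> 'a::real_normed_field) \<Rightarrow> 'a" where
  "monom_eval n \<alpha> x = (\<Prod>i<n. x i ^ \<alpha> i)"

definition hpoly_eval :: "nat \<Rightarrow> nat \<Rightarrow> ((nat \<Rightarrow> nat) \<Rightarrow> 'a::real_normed_field)
    \<Rightarrow> (nat \<Rightarrow> 'a) \<Rightarrow> 'a" where
  "hpoly_eval n m a x = (\<Sum>\<alpha>\<in>multi_idx n m. a \<alpha> * monom_eval n \<alpha> x)"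

text \<open>Closed unit ball of \<ell>_p^n: (\<Sum>|x_i|^p)^{1/p} \<le> 1, i.e. \<Sum>|x_i|^p \<le> 1 (p \<ge> 1).
  Coordinates outside {0..<n} are irrelevant for the polynomial.\<close>
definition lp_ball :: "nat \<Rightarrow> nat \<Rightarrow> (nat \<Rightarrow> 'a::real_normed_field) set" where
  "lp_ball p n = {x. (\<Sum>i<n. norm (x i) ^ p) \<le> 1}"

definition hpoly_norm :: "nat \<Rightarrow> nat \<Rightarrow> ((nat \<Rightarrow> nat) \<Rightarrow> 'a::real_normed_field) \<Rightarrow> real" where
  "hpoly_norm n m a = (SUP x\<in>(lp_ball m n :: (nat \<Rightarrow> 'a) set). norm (hpoly_eval n m a x))"

definition coeff_max :: "nat \<Rightarrow> nat \<Rightarrow> ((nat \<Rightarrow> nat) \<Rightarrow> 'a::real_normed_field) \<Rightarrow> real" where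
  "coeff_max n m a = Max ((\<lambda>\<alpha>. norm (a \<alpha>)) ` multi_idx n m)"

definition coeff_lr :: "real \<Rightarrow> nat \<Rightarrow> nat \<Rightarrow> ((nat \<Rightarrow> nat) \<Rightarrow> 'a::real_normed_field) \<Rightarrow> real" where
  "coeff_lr r n m a = (\<Sum>\<alpha>\<in>multi_idx n m. norm (a \<alpha>) powr r) powr (1 / r)"

end

theory Submission
  imports Defs "HOL-Computational_Algebra.Formal_Power_Series"
begin

unbundle fps_syntax

text \<open>
  A coefficient is recovered from point evaluations by a product of finite differences:
  for |\<alpha>| = m, summing P(2j - \<alpha>) over 0 \<le> j \<le> \<alpha> with the weights
  \<Prod>_i binom(\<alpha>_i, j_i) (-1)^(\<alpha>_i - j_i) kills every monomial x^\<beta> with \<beta> \<noteq> \<alpha> and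
  returns a_\<alpha> \<Prod>_i 2^\<alpha>_i \<alpha>_i!, because in one variable these weights produce the Taylor
  coefficients of (e^t - e^(-t))^a = (2t)^a + O(t^(a+1)). The nodes (2j - \<alpha>)/m lie in the unit
  ball of \<ell>_m^n and the weights have total mass 2^m, so |a_\<alpha>| \<le> m^m \<parallel>P\<parallel> for every n, which implies
  both stated bounds as their extra factors are at least 1.

  The polynomial x_1^m + ... + x_n^m has norm at most 1 but n coefficients equal to 1,
  so no \<ell>_r bound on the coefficients can be uniform in n.
\<close>

definition sinh_moment :: "nat \<Rightarrow> nat \<Rightarrow> real" where
  "sinh_moment a b = (\<Sum>j\<le>a. real (a choose j) * (-1)^(a-j) * (2*real j - real a)^b)"

lemma sinh_moment_fps:
  "sinh_moment a b / fact b = ((fps_exp (1::real) - fps_exp (-1))^a) $ b"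
proof -
  have "(fps_exp (1::real) - fps_exp (-1))^a = (fps_exp 1 + (- fps_exp (-1)))^a" by simp
  also have "\<dots> = (\<Sum>j\<le>a. of_nat (a choose j) * fps_exp 1 ^ j * (- fps_exp (-1)) ^ (a - j))"
    by (rule binomial_ring)
  also have "\<dots> = (\<Sum>j\<le>a. fps_const (real (a choose j) * (-1)^(a-j)) * fps_exp (2*real j - real a))"
  proof (rule sum.cong[OF refl])
    fix j assume j: "j \<in> {..a}"
    have "fps_exp (1::real) ^ j * (- fps_exp (-1)) ^ (a - j)
          = (-1)^(a-j) * (fps_exp (real j) * fps_exp (real (a-j) * (-1)))"
      by (simp add: fps_exp_power_mult power_minus[of "fps_exp (-1::real)"] del: of_nat_diff)
    also have "\<dots> = (-1)^(a-j) * fps_exp (2*real j - real a)"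
      using j by (simp add: fps_exp_add_mult[symmetric] of_nat_diff algebra_simps)
    finally show "of_nat (a choose j) * fps_exp 1 ^ j * (- fps_exp (-1)) ^ (a - j) =
      fps_const (real (a choose j) * (-1)^(a-j)) * fps_exp (2*real j - real a)"
      by (simp add: fps_of_nat fps_const_mult[symmetric] fps_const_neg[symmetric]
          fps_const_power[symmetric] mult.assoc)
  qed
  finally show ?thesis
    by (simp add: sinh_moment_def fps_sum_nth sum_divide_distrib)
qed

lemma sinh_moment_eq:
  assumes "b \<le> a"
  shows "sinh_moment a b = (if b < a then 0 else 2^a * fact a)"
proof -
  define E where "E = fps_exp (1::real) - fps_exp (-1)"
  define g where "g = Abs_fps (\<lambda>k. E $ (k+1))"
  have E: "E = fps_X * g"
  proof (rule fps_ext)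
    fix n show "E $ n = (fps_X * g) $ n"
      by (cases n) (simp add: E_def, simp add: g_def)
  qed
  have g0: "g $ 0 = 2" by (simp add: g_def E_def)
  have "E^a = fps_X^a * g^a" by (simp add: E power_mult_distrib)
  hence "E^a $ b = (if b < a then 0 else 2^a)"
    using assms g0 by (simp add: fps_X_power_mult_nth fps_nth_power_0)
  with sinh_moment_fps[of a b] assms show ?thesis
    by (auto simp: E_def divide_eq_eq split: if_splits)
qed

lemma multi_idx_le: "\<alpha> \<in> multi_idx n m \<Longrightarrow> \<alpha> i \<le> m"
  unfolding multi_idx_def
  by (cases "i < n") (auto intro!: member_le_sum[of i "{..<n}" \<alpha>, simplified] elim: ord_le_eq_trans)

lemma finite_multi_idx: "finite (multi_idx n m)"
proof -
  let ?ext = "\<lambda>f i. if i < n then f i else 0"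
  have "multi_idx n m \<subseteq> ?ext ` PiE {..<n} (\<lambda>_. {..m})"
  proof
    fix \<alpha> assume \<alpha>: "\<alpha> \<in> multi_idx n m"
    have "\<alpha> = ?ext (restrict \<alpha> {..<n})"
      using \<alpha> by (auto simp: multi_idx_def fun_eq_iff)
    moreover have "restrict \<alpha> {..<n} \<in> PiE {..<n} (\<lambda>_. {..m})"
      using multi_idx_le[OF \<alpha>] by auto
    ultimately show "\<alpha> \<in> ?ext ` PiE {..<n} (\<lambda>_. {..m})" by blast
  qed
  then show ?thesis by (rule finite_subset) (simp add: finite_PiE)
qed

lemma multi_idx_nonempty: "n \<ge> 1 \<Longrightarrow> multi_idx n m \<noteq> {}"
proof -
  assume "n \<ge> 1"
  then have "(\<lambda>k. if k = 0 then m else 0) \<in> multi_idx n m"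
    by (auto simp: multi_idx_def sum.delta)
  then show ?thesis by blast
qed

lemma multi_idx_less_coord:
  assumes "\<alpha> \<in> multi_idx n m" "\<beta> \<in> multi_idx n m" "\<beta> \<noteq> \<alpha>"
  shows "\<exists>i<n. \<beta> i < \<alpha> i"
proof (rule ccontr)
  assume "\<not> (\<exists>i<n. \<beta> i < \<alpha> i)"
  hence le: "\<forall>i\<in>{..<n}. \<alpha> i \<le> \<beta> i" by auto
  have "\<alpha> i = \<beta> i" if "i < n" for i
  proof (rule ccontr)
    assume "\<alpha> i \<noteq> \<beta> i"
    with le that have "sum \<alpha> {..<n} < sum \<beta> {..<n}"
      by (intro sum_strict_mono_ex1) force+
    thus False using assms by (simp add: multi_idx_def)
  qed
  moreover have "\<alpha> i = \<beta> i" if "i \<ge> n" for i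
    using assms that by (simp add: multi_idx_def)
  ultimately have "\<alpha> = \<beta>" by (metis ext not_le)
  thus False using assms by simp
qed

lemma norm_le_1_of_lp_ball:
  assumes "x \<in> lp_ball m n" "m \<ge> 1" "i < n"
  shows "norm (x i) \<le> 1"
proof (rule ccontr)
  assume "\<not> norm (x i) \<le> 1"
  hence "1 < norm (x i) ^ m" using assms(2) by (simp add: one_less_power)
  also have "norm (x i) ^ m \<le> (\<Sum>k<n. norm (x k) ^ m)"
    using assms(3) by (intro member_le_sum) auto
  also have "\<dots> \<le> 1" using assms(1) by (simp add: lp_ball_def)
  finally show False by simp
qed

lemma zero_in_lp_ball: "m \<ge> 1 \<Longrightarrow> (\<lambda>_. 0) \<in> lp_ball m n"
  by (cases m) (simp_all add: lp_ball_def)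

lemma bdd_above_hpoly_eval:
  fixes a :: "(nat \<Rightarrow> nat) \<Rightarrow> 'a::real_normed_field"
  assumes "m \<ge> 1"
  shows "bdd_above ((\<lambda>x. norm (hpoly_eval n m a x)) ` (lp_ball m n :: (nat \<Rightarrow> 'a) set))"
proof (rule bdd_aboveI2)
  fix x :: "nat \<Rightarrow> 'a" assume x: "x \<in> lp_ball m n"
  have monom: "norm (monom_eval n \<beta> x) \<le> 1" for \<beta>
    unfolding monom_eval_def prod_norm[symmetric]
    by (rule prod_le_1) (auto simp: norm_power intro!: power_le_one norm_le_1_of_lp_ball[OF x assms])
  have "norm (hpoly_eval n m a x) \<le> (\<Sum>\<beta>\<in>multi_idx n m. norm (a \<beta> * monom_eval n \<beta> x))"
    unfolding hpoly_eval_def by (rule norm_sum)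
  also have "\<dots> \<le> (\<Sum>\<beta>\<in>multi_idx n m. norm (a \<beta>))"
    by (intro sum_mono) (auto simp: norm_mult intro!: mult_left_le monom)
  finally show "norm (hpoly_eval n m a x) \<le> (\<Sum>\<beta>\<in>multi_idx n m. norm (a \<beta>))" .
qed

lemma hpoly_norm_upper:
  fixes x :: "nat \<Rightarrow> 'a::real_normed_field"
  assumes "m \<ge> 1" "x \<in> lp_ball m n"
  shows "norm (hpoly_eval n m a x) \<le> hpoly_norm n m a"
  unfolding hpoly_norm_def by (rule cSUP_upper[OF assms(2) bdd_above_hpoly_eval[OF assms(1)]])

lemma hpoly_norm_nonneg:
  assumes "m \<ge> 1"
  shows "0 \<le> hpoly_norm n m (a :: _ \<Rightarrow> 'a::real_normed_field)"
  using hpoly_norm_upper[OF assms zero_in_lp_ball[OF assms], of n a] norm_ge_zero order_trans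
  by blast

lemma hpoly_norm_le:
  fixes a :: "(nat \<Rightarrow> nat) \<Rightarrow> 'a::real_normed_field"
  assumes "m \<ge> 1" "\<And>x::nat \<Rightarrow> 'a. x \<in> lp_ball m n \<Longrightarrow> norm (hpoly_eval n m a x) \<le> B"
  shows "hpoly_norm n m a \<le> B"
  unfolding hpoly_norm_def
  using zero_in_lp_ball[OF assms(1)] assms(2) by (intro cSUP_least) blast+

lemma hpoly_eval_scale:
  "hpoly_eval n m a (\<lambda>i. c * y i) = c ^ m * hpoly_eval n m a y"
proof -
  have "monom_eval n \<beta> (\<lambda>i. c * y i) = c ^ m * monom_eval n \<beta> y" if "\<beta> \<in> multi_idx n m" for \<beta>
  proof -
    have "(\<Prod>i<n. c ^ \<beta> i) = c ^ m" using that by (simp add: multi_idx_def power_sum[symmetric])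
    thus ?thesis by (simp add: monom_eval_def power_mult_distrib prod.distrib)
  qed
  thus ?thesis
    unfolding hpoly_eval_def by (simp add: sum_distrib_left algebra_simps)
qed

lemma coeff_max_le:
  assumes "n \<ge> 1" "\<And>\<alpha>. \<alpha> \<in> multi_idx n m \<Longrightarrow> norm (a \<alpha>) \<le> B"
  shows "coeff_max n m a \<le> B"
  unfolding coeff_max_def
  using assms finite_multi_idx multi_idx_nonempty[OF assms(1)] by (simp add: Max_le_iff)

definition diff_weight :: "nat \<Rightarrow> (nat \<Rightarrow> nat) \<Rightarrow> (nat \<Rightarrow> nat) \<Rightarrow> real" where
  "diff_weight n \<alpha> j = (\<Prod>i<n. real (\<alpha> i choose j i) * (-1)^(\<alpha> i - j i))"

definition diff_node :: "(nat \<Rightarrow> nat) \<Rightarrow> (nat \<Rightarrow> nat) \<Rightarrow> nat \<Rightarrow> real" where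
  "diff_node \<alpha> j i = 2 * real (j i) - real (\<alpha> i)"

lemma sum_diff_weight_monom:
  "(\<Sum>j\<in>PiE {..<n} (\<lambda>i. {..\<alpha> i}).
      of_real (diff_weight n \<alpha> j) * monom_eval n \<beta> (\<lambda>i. of_real (diff_node \<alpha> j i)))
   = (of_real (\<Prod>i<n. sinh_moment (\<alpha> i) (\<beta> i)) :: 'a::real_normed_field)"
proof -
  have "(\<Sum>j\<in>PiE {..<n} (\<lambda>i. {..\<alpha> i}).
          of_real (diff_weight n \<alpha> j) * monom_eval n \<beta> (\<lambda>i. of_real (diff_node \<alpha> j i)))
      = (\<Sum>j\<in>PiE {..<n} (\<lambda>i. {..\<alpha> i}). \<Prod>i<n. (of_real (real (\<alpha> i choose j i) *
          (-1)^(\<alpha> i - j i) * (2 * real (j i) - real (\<alpha> i))^(\<beta> i)) :: 'a))"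
    by (simp add: diff_weight_def diff_node_def monom_eval_def prod.distrib[symmetric])
  also have "\<dots> = (\<Prod>i<n. \<Sum>k\<le>\<alpha> i. (of_real (real (\<alpha> i choose k) *
          (-1)^(\<alpha> i - k) * (2 * real k - real (\<alpha> i))^(\<beta> i)) :: 'a))"
    by (rule prod_sum_PiE[symmetric]) auto
  also have "\<dots> = of_real (\<Prod>i<n. sinh_moment (\<alpha> i) (\<beta> i))"
    by (simp add: sinh_moment_def)
  finally show ?thesis .
qed

lemma hpoly_coeff_extraction:
  fixes a :: "(nat \<Rightarrow> nat) \<Rightarrow> 'a::real_normed_field"
  assumes \<alpha>: "\<alpha> \<in> multi_idx n m"
  shows "(\<Sum>j\<in>PiE {..<n} (\<lambda>i. {..\<alpha> i}).
            of_real (diff_weight n \<alpha> j) * hpoly_eval n m a (\<lambda>i. of_real (diff_node \<alpha> j i)))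
       = a \<alpha> * of_real (\<Prod>i<n. 2^(\<alpha> i) * fact (\<alpha> i))"
proof -
  let ?J = "PiE {..<n} (\<lambda>i. {..\<alpha> i})"
  have moment: "(\<Prod>i<n. sinh_moment (\<alpha> i) (\<beta> i))
      = (if \<beta> = \<alpha> then \<Prod>i<n. 2^(\<alpha> i) * fact (\<alpha> i) else 0)"
    if \<beta>: "\<beta> \<in> multi_idx n m" for \<beta>
  proof (cases "\<beta> = \<alpha>")
    case True
    then show ?thesis by (auto intro!: prod.cong simp: sinh_moment_eq)
  next
    case False
    then obtain i where "i < n" "\<beta> i < \<alpha> i" using multi_idx_less_coord[OF \<alpha> \<beta>] by blast
    then show ?thesis using False sinh_moment_eq[of "\<beta> i" "\<alpha> i"] by (auto intro!: prod_zero)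
  qed
  have "(\<Sum>j\<in>?J. of_real (diff_weight n \<alpha> j) * hpoly_eval n m a (\<lambda>i. of_real (diff_node \<alpha> j i)))
      = (\<Sum>\<beta>\<in>multi_idx n m. a \<beta> * (\<Sum>j\<in>?J.
           of_real (diff_weight n \<alpha> j) * monom_eval n \<beta> (\<lambda>i. of_real (diff_node \<alpha> j i))))"
    unfolding hpoly_eval_def
    by (simp add: sum_distrib_left sum_distrib_right sum.swap[of _ ?J] algebra_simps)
  also have "\<dots> = (\<Sum>\<beta>\<in>multi_idx n m.
      if \<beta> = \<alpha> then a \<alpha> * of_real (\<Prod>i<n. 2^(\<alpha> i) * fact (\<alpha> i)) else 0)"
    by (intro sum.cong refl) (simp add: sum_diff_weight_monom moment)
  also have "\<dots> = a \<alpha> * of_real (\<Prod>i<n. 2^(\<alpha> i) * fact (\<alpha> i))"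
    using \<alpha> finite_multi_idx by simp
  finally show ?thesis .
qed

lemma sum_abs_diff_weight:
  assumes "\<alpha> \<in> multi_idx n m"
  shows "(\<Sum>j\<in>PiE {..<n} (\<lambda>i. {..\<alpha> i}). \<bar>diff_weight n \<alpha> j\<bar>) = 2 ^ m"
proof -
  have "(\<Sum>j\<in>PiE {..<n} (\<lambda>i. {..\<alpha> i}). \<bar>diff_weight n \<alpha> j\<bar>)
      = (\<Prod>i<n. \<Sum>k\<le>\<alpha> i. real (\<alpha> i choose k))"
    by (simp add: diff_weight_def abs_prod abs_mult prod_sum_PiE)
  also have "\<dots> = (\<Prod>i<n. 2 ^ \<alpha> i)"
    by (intro prod.cong refl) (metis choose_row_sum of_nat_numeral of_nat_power of_nat_sum)
  also have "\<dots> = 2 ^ m"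
    using assms by (simp add: multi_idx_def power_sum[symmetric])
  finally show ?thesis .
qed

lemma scaled_diff_node_in_lp_ball:
  assumes \<alpha>: "\<alpha> \<in> multi_idx n m" and m: "m \<ge> 1" and j: "j \<in> PiE {..<n} (\<lambda>i. {..\<alpha> i})"
  shows "(\<lambda>i. of_real (diff_node \<alpha> j i / real m)) \<in> lp_ball m n"
proof -
  have coord: "norm (of_real (diff_node \<alpha> j i / real m) :: 'a) ^ m \<le> real (\<alpha> i) / real m"
    if i: "i < n" for i
  proof -
    let ?y = "\<bar>diff_node \<alpha> j i / real m\<bar>"
    have "j i \<le> \<alpha> i" using j i by auto
    then have "?y \<le> real (\<alpha> i) / real m"
      using m by (simp add: diff_node_def abs_divide divide_right_mono)
    moreover have "real (\<alpha> i) / real m \<le> 1"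
      using m multi_idx_le[OF \<alpha>, of i] by simp
    ultimately have "?y \<le> 1" by linarith
    then have "?y ^ m \<le> ?y ^ 1"
      using m by (intro power_decreasing) auto
    with \<open>?y \<le> real (\<alpha> i) / real m\<close> show ?thesis
      by (simp only: norm_of_real power_one_right)
  qed
  have "(\<Sum>i<n. real (\<alpha> i) / real m) = 1"
    using m \<alpha> by (simp add: multi_idx_def sum_divide_distrib[symmetric] of_nat_sum[symmetric])
  moreover have "(\<Sum>i<n. norm (of_real (diff_node \<alpha> j i / real m) :: 'a) ^ m)
      \<le> (\<Sum>i<n. real (\<alpha> i) / real m)"
    using coord by (intro sum_mono) simp
  ultimately show ?thesis
    unfolding lp_ball_def mem_Collect_eq by linarith
qed

lemma norm_hpoly_eval_diff_node:
  fixes a :: "(nat \<Rightarrow> nat) \<Rightarrow> 'a::real_normed_field"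
  assumes "\<alpha> \<in> multi_idx n m" "m \<ge> 1" "j \<in> PiE {..<n} (\<lambda>i. {..\<alpha> i})"
  shows "norm (hpoly_eval n m a (\<lambda>i. of_real (diff_node \<alpha> j i)))
           \<le> real m ^ m * hpoly_norm n m a"
proof -
  let ?y = "\<lambda>i. of_real (diff_node \<alpha> j i / real m) :: 'a"
  have "(\<lambda>i. of_real (diff_node \<alpha> j i)) = (\<lambda>i. of_real (real m) * ?y i)"
    using assms(2) by (auto simp: fun_eq_iff of_real_mult[symmetric])
  then have "hpoly_eval n m a (\<lambda>i. of_real (diff_node \<alpha> j i))
      = of_real (real m) ^ m * hpoly_eval n m a ?y"
    by (simp only: hpoly_eval_scale)
  moreover have "norm (hpoly_eval n m a ?y) \<le> hpoly_norm n m a"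
    using assms by (intro hpoly_norm_upper scaled_diff_node_in_lp_ball)
  ultimately show ?thesis
    by (simp add: norm_mult norm_power mult_left_mono)
qed

lemma norm_coeff_le_hpoly_norm:
  fixes a :: "(nat \<Rightarrow> nat) \<Rightarrow> 'a::real_normed_field"
  assumes m: "m \<ge> 1" and \<alpha>: "\<alpha> \<in> multi_idx n m"
  shows "norm (a \<alpha>) \<le> real m ^ m * hpoly_norm n m a"
proof -
  let ?J = "PiE {..<n} (\<lambda>i. {..\<alpha> i})"
  let ?F = "\<Prod>i<n. fact (\<alpha> i) :: real"
  have F: "?F \<ge> 1" by (intro prod_ge_1) auto
  have "(\<Prod>i<n. 2^(\<alpha> i) * fact (\<alpha> i) :: real) = 2 ^ m * ?F"
    using \<alpha> by (simp add: multi_idx_def prod.distrib power_sum[symmetric])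
  with F have "norm (a \<alpha>) * (2 ^ m * ?F) = norm (\<Sum>j\<in>?J.
      of_real (diff_weight n \<alpha> j) * hpoly_eval n m a (\<lambda>i. of_real (diff_node \<alpha> j i)))"
    by (simp only: hpoly_coeff_extraction[OF \<alpha>] norm_mult norm_of_real) simp
  also have "\<dots> \<le> (\<Sum>j\<in>?J. \<bar>diff_weight n \<alpha> j\<bar> * (real m ^ m * hpoly_norm n m a))"
    by (rule order_trans[OF norm_sum], rule sum_mono)
      (simp add: norm_mult mult_left_mono norm_hpoly_eval_diff_node[OF \<alpha> m])
  also have "\<dots> = 2 ^ m * (real m ^ m * hpoly_norm n m a)"
    by (simp add: sum_distrib_right[symmetric] sum_abs_diff_weight[OF \<alpha>])
  finally have "norm (a \<alpha>) * ?F \<le> real m ^ m * hpoly_norm n m a"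
    by simp
  moreover have "norm (a \<alpha>) * 1 \<le> norm (a \<alpha>) * ?F"
    using F by (intro mult_left_mono) auto
  ultimately show ?thesis by simp
qed

lemma coeff_max_le_hpoly_norm:
  fixes a :: "(nat \<Rightarrow> nat) \<Rightarrow> 'a::real_normed_field"
  assumes "n \<ge> 1" "m \<ge> 1" "K \<ge> 1"
  shows "coeff_max n m a \<le> K * real m ^ m * hpoly_norm n m a"
proof -
  have "real m ^ m * hpoly_norm n m a \<ge> 0"
    by (intro mult_nonneg_nonneg) (simp_all add: hpoly_norm_nonneg[OF assms(2)])
  then have "real m ^ m * hpoly_norm n m a \<le> K * real m ^ m * hpoly_norm n m a"
    using assms(3) by (simp add: mult_le_cancel_right1 mult.assoc)
  moreover have "coeff_max n m a \<le> real m ^ m * hpoly_norm n m a"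
    using assms(1,2) by (intro coeff_max_le norm_coeff_le_hpoly_norm)
  ultimately show ?thesis by linarith
qed

definition single_idx :: "nat \<Rightarrow> nat \<Rightarrow> nat \<Rightarrow> nat" where
  "single_idx m i = (\<lambda>k. if k = i then m else 0)"

definition power_sum_coeff :: "nat \<Rightarrow> (nat \<Rightarrow> nat) \<Rightarrow> 'a::real_normed_field" where
  "power_sum_coeff m \<beta> = (if \<beta> \<in> range (single_idx m) then 1 else 0)"

lemma inj_single_idx: "m \<ge> 1 \<Longrightarrow> inj (single_idx m)"
  by (rule injI) (metis single_idx_def not_one_le_zero)

lemma multi_idx_Int_range_single_idx:
  assumes "m \<ge> 1"
  shows "multi_idx n m \<inter> range (single_idx m) = single_idx m ` {..<n}"
  using assms by (auto simp: multi_idx_def single_idx_def not_less image_iff split: if_splits)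

lemma hpoly_eval_power_sum_coeff:
  assumes "m \<ge> 1"
  shows "hpoly_eval n m (power_sum_coeff m) x = (\<Sum>i<n. x i ^ m)"
proof -
  have "power_sum_coeff m \<beta> * monom_eval n \<beta> x
      = (if \<beta> \<in> range (single_idx m) then monom_eval n \<beta> x else 0)" for \<beta>
    by (simp add: power_sum_coeff_def)
  then have "hpoly_eval n m (power_sum_coeff m) x
      = (\<Sum>\<beta>\<in>multi_idx n m \<inter> range (single_idx m). monom_eval n \<beta> x)"
    unfolding hpoly_eval_def by (simp add: sum.If_cases finite_multi_idx)
  also have "\<dots> = (\<Sum>i<n. monom_eval n (single_idx m i) x)"
    unfolding multi_idx_Int_range_single_idx[OF assms]
    by (rule sum.reindex[OF inj_on_subset[OF inj_single_idx[OF assms]], unfolded comp_def]) simp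
  also have "\<dots> = (\<Sum>i<n. x i ^ m)"
  proof (intro sum.cong refl)
    fix i assume "i \<in> {..<n}"
    have "monom_eval n (single_idx m i) x = (\<Prod>k<n. if k = i then x k ^ m else 1)"
      unfolding monom_eval_def single_idx_def by (intro prod.cong refl) simp
    with \<open>i \<in> {..<n}\<close> show "monom_eval n (single_idx m i) x = x i ^ m"
      by (simp add: prod.delta)
  qed
  finally show ?thesis .
qed

lemma hpoly_norm_power_sum_coeff_le_1:
  assumes "m \<ge> 1"
  shows "hpoly_norm n m (power_sum_coeff m :: _ \<Rightarrow> 'a::real_normed_field) \<le> 1"
proof (rule hpoly_norm_le[OF assms])
  fix x :: "nat \<Rightarrow> 'a" assume "x \<in> lp_ball m n"
  then have "(\<Sum>i<n. norm (x i ^ m)) \<le> 1"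
    by (simp add: lp_ball_def norm_power)
  then show "norm (hpoly_eval n m (power_sum_coeff m) x) \<le> 1"
    unfolding hpoly_eval_power_sum_coeff[OF assms] by (rule order_trans[OF norm_sum])
qed

lemma coeff_lr_power_sum_coeff:
  assumes "m \<ge> 1"
  shows "coeff_lr r n m (power_sum_coeff m :: _ \<Rightarrow> 'a::real_normed_field) = real n powr (1 / r)"
proof -
  have "norm (power_sum_coeff m \<beta> :: 'a) powr r
      = (if \<beta> \<in> range (single_idx m) then 1 else 0)" for \<beta>
    by (simp add: power_sum_coeff_def)
  then have "(\<Sum>\<beta>\<in>multi_idx n m. norm (power_sum_coeff m \<beta> :: 'a) powr r)
      = real (card (multi_idx n m \<inter> range (single_idx m)))"
    by (simp add: sum.If_cases finite_multi_idx)
  also have "\<dots> = real n"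
    using inj_on_subset[OF inj_single_idx[OF assms]]
    by (simp add: multi_idx_Int_range_single_idx[OF assms] card_image)
  finally show ?thesis by (simp add: coeff_lr_def)
qed

lemma coeff_lr_not_uniformly_bounded:
  fixes r :: real
  assumes m: "m \<ge> 1" and r: "r > 0"
  shows "\<not> (\<exists>C::real. \<forall>n\<ge>1. \<forall>a::(nat \<Rightarrow> nat) \<Rightarrow> 'a::real_normed_field.
        coeff_lr r n m a \<le> C * hpoly_norm n m a)"
proof
  assume "\<exists>C::real. \<forall>n\<ge>1. \<forall>a::(nat \<Rightarrow> nat) \<Rightarrow> 'a. coeff_lr r n m a \<le> C * hpoly_norm n m a"
  then obtain C where C: "\<And>n a. n \<ge> 1 \<Longrightarrow> coeff_lr r n m (a :: _ \<Rightarrow> 'a) \<le> C * hpoly_norm n m a"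
    by blast
  have bound: "real n powr (1 / r) \<le> \<bar>C\<bar>" if "n \<ge> 1" for n
  proof -
    let ?H = "hpoly_norm n m (power_sum_coeff m :: _ \<Rightarrow> 'a)"
    have "0 \<le> ?H" "?H \<le> 1"
      using hpoly_norm_nonneg hpoly_norm_power_sum_coeff_le_1 m by blast+
    then have "C * ?H \<le> \<bar>C\<bar> * ?H" "\<bar>C\<bar> * ?H \<le> \<bar>C\<bar>"
      by (auto intro: mult_right_mono mult_left_le)
    with C[OF that, of "power_sum_coeff m"] show ?thesis
      unfolding coeff_lr_power_sum_coeff[OF m] by linarith
  qed
  obtain N :: nat where N: "(\<bar>C\<bar> + 1) powr r \<le> real N" using real_arch_simple by blast
  have "\<bar>C\<bar> + 1 = ((\<bar>C\<bar> + 1) powr r) powr (1 / r)"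
    using r by (simp add: powr_powr)
  also have "\<dots> \<le> real (max 1 N) powr (1 / r)"
    using N r by (intro powr_mono2) auto
  also have "\<dots> \<le> \<bar>C\<bar>" by (rule bound) simp
  finally show False by simp
qed

theorem theorem4:
  fixes m :: nat
  assumes "m \<ge> 2"
  shows
    "(\<exists>C::real. C \<ge> 1 \<and> (\<forall>n\<ge>1. \<forall>a::(nat \<Rightarrow> nat) \<Rightarrow> real.
        coeff_max n m a \<le> C * hpoly_norm n m a))
   \<and> (\<exists>C::real. C \<ge> 1 \<and> (\<forall>n\<ge>1. \<forall>a::(nat \<Rightarrow> nat) \<Rightarrow> complex.
        coeff_max n m a \<le> C * hpoly_norm n m a))
   \<and> (\<forall>n\<ge>1. \<forall>a::(nat \<Rightarrow> nat) \<Rightarrow> real.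
        coeff_max n m a \<le> sqrt 2 ^ (m - 1) * real m ^ m * hpoly_norm n m a)
   \<and> (\<forall>n\<ge>1. \<forall>a::(nat \<Rightarrow> nat) \<Rightarrow> complex.
        coeff_max n m a \<le> (2 / sqrt pi) ^ (m - 1) * real m ^ m * hpoly_norm n m a)
   \<and> (\<forall>r::real. r > 0 \<longrightarrow> \<not> (\<exists>C::real. \<forall>n\<ge>1. \<forall>a::(nat \<Rightarrow> nat) \<Rightarrow> real.
        coeff_lr r n m a \<le> C * hpoly_norm n m a))
   \<and> (\<forall>r::real. r > 0 \<longrightarrow> \<not> (\<exists>C::real. \<forall>n\<ge>1. \<forall>a::(nat \<Rightarrow> nat) \<Rightarrow> complex.
        coeff_lr r n m a \<le> C * hpoly_norm n m a))"
proof -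
  have m: "m \<ge> 1" using assms by simp
  have "sqrt pi \<le> 2"
    using pi_less_4 real_sqrt_le_mono[of pi 4] by simp
  then have K_real: "sqrt 2 ^ (m - 1) \<ge> 1" and K_complex: "(2 / sqrt pi) ^ (m - 1) \<ge> 1"
    by (auto intro!: one_le_power)
  have m_pow: "real m ^ m \<ge> 1" using m by simp
  show ?thesis
  proof (intro conjI)
    show "\<exists>C\<ge>1. \<forall>n\<ge>1. \<forall>a::(nat \<Rightarrow> nat) \<Rightarrow> real. coeff_max n m a \<le> C * hpoly_norm n m a"
      using coeff_max_le_hpoly_norm[OF _ m K_real] mult_mono[OF K_real m_pow] by auto
    show "\<exists>C\<ge>1. \<forall>n\<ge>1. \<forall>a::(nat \<Rightarrow> nat) \<Rightarrow> complex. coeff_max n m a \<le> C * hpoly_norm n m a"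
      using coeff_max_le_hpoly_norm[OF _ m K_complex] mult_mono[OF K_complex m_pow] by auto
  qed (use coeff_max_le_hpoly_norm[OF _ m K_real] coeff_max_le_hpoly_norm[OF _ m K_complex]
      coeff_lr_not_uniformly_bounded[OF m] in blast)+
qed

end
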